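(* Let $r\ge 4$ and let $w:E(K_r)\to\mathbb{R}_{>0}$ be a positive edge-weighting of the complete graph $K_r$ on vertex set $U$ which is vertex-induced, i.e. there is $a:U\to\mathbb{R}_{\ge0}$ with $w(uv)=\frac{a(u)+a(v)}{2}$ for all edges $uv$. For each edge $e$ let $C_w(e)$ be the maximum of $w(C)=\sum_{f\in E(C)}w(f)$ over all cycles $C$ of $K_r$ containing $e$. Then $$\sum_{e\in E(K_r)}\frac{w(e)}{C_w(e)}=\frac{r-1}{2}.$$ *)

theory Defs
  imports Complex_Main
begin

definition Kedges :: "'a set \<Rightarrow> 'a set set" where
  "Kedges U = {e. \<exists>u v. u \<in> U \<and> v \<in> U \<and> u \<noteq> v \<and> e = {u, v}}"

text \<open>A cycle of the complete graph on U, given as the cyclic list of its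
  (pairwise distinct) vertices, of length at least 3.\<close>
definition is_cycle :: "'a set \<Rightarrow> 'a list \<Rightarrow> bool" where
  "is_cycle U vs \<longleftrightarrow> distinct vs \<and> set vs \<subseteq> U \<and> length vs \<ge> 3"

definition cycle_edges :: "'a list \<Rightarrow> 'a set set" where
  "cycle_edges vs = {{vs ! i, vs ! ((i + 1) mod length vs)} | i. i < length vs}"

definition cycle_weight :: "('a set \<Rightarrow> real) \<Rightarrow> 'a list \<Rightarrow> real" where
  "cycle_weight w vs = (\<Sum>f\<in>cycle_edges vs. w f)"

definition Cw :: "'a set \<Rightarrow> ('a set \<Rightarrow> real) \<Rightarrow> 'a set \<Rightarrow> real" where
  "Cw U w e = Max {cycle_weight w vs | vs. is_cycle U vs \<and> e \<in> cycle_edges vs}"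

end

theory Submission
  imports Defs
begin

text \<open>For vertex-induced weights each vertex of a cycle lies on exactly two of its edges, so the
  weight of a cycle is the \<open>a\<close>-mass of its vertex set. As \<open>a \<ge> 0\<close>, the heaviest cycle through any
  edge is a Hamiltonian one, i.e. \<open>C\<^sub>w(e) = a(U)\<close> for every edge. Each vertex lies on \<open>r - 1\<close>
  edges, so the total edge weight is \<open>(r - 1)/2 \<cdot> a(U)\<close>; positivity of \<open>w\<close> forces \<open>a(U) > 0\<close>.\<close>

definition vertex_induced :: "'a set \<Rightarrow> ('a set \<Rightarrow> real) \<Rightarrow> ('a \<Rightarrow> real) \<Rightarrow> bool" where
  "vertex_induced U w a \<longleftrightarrow> (\<forall>u\<in>U. \<forall>v\<in>U. u \<noteq> v \<longrightarrow> w {u, v} = (a u + a v) / 2)"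

lemma cyclic_successors_swap_imp_le_2:
  assumes "i < (n::nat)" "(i + 1) mod n = j" "(j + 1) mod n = i"
  shows "n \<le> 2"
proof -
  have "(i + 2) mod n = i mod n"
    using assms mod_add_left_eq[of "i + 1" n 1] by simp
  then have "n dvd 2"
    using mod_eq_dvd_iff_nat[of i "i + 2" n] by simp
  then show ?thesis
    by (simp add: dvd_imp_le)
qed

lemma cyclic_successor_neq:
  assumes "i < (n::nat)" "2 \<le> n"
  shows "(i + 1) mod n \<noteq> i"
proof
  assume "(i + 1) mod n = i"
  then have "n dvd 1"
    using mod_eq_dvd_iff_nat[of i "i + 1" n] \<open>i < n\<close> by simp
  with \<open>2 \<le> n\<close> show False
    by simp
qed

lemma inj_on_cycle_edge:
  assumes "distinct vs" "length vs \<ge> 3"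
  shows "inj_on (\<lambda>i. {vs ! i, vs ! ((i + 1) mod length vs)}) {..<length vs}"
proof (rule inj_onI, rule ccontr)
  fix i j
  assume i: "i \<in> {..<length vs}" and j: "j \<in> {..<length vs}" and "i \<noteq> j"
    and "{vs ! i, vs ! ((i + 1) mod length vs)} = {vs ! j, vs ! ((j + 1) mod length vs)}"
  then have "vs ! i = vs ! ((j + 1) mod length vs)" "vs ! ((i + 1) mod length vs) = vs ! j"
    using nth_eq_iff_index_eq[OF \<open>distinct vs\<close>] by (auto simp: doubleton_eq_iff)
  moreover have "(k + 1) mod length vs < length vs" for k
    using \<open>length vs \<ge> 3\<close> by (intro mod_less_divisor) linarith
  ultimately have "(j + 1) mod length vs = i" "(i + 1) mod length vs = j"
    using nth_eq_iff_index_eq[OF \<open>distinct vs\<close>] i j by (metis lessThan_iff)+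
  then show False
    using cyclic_successors_swap_imp_le_2 i \<open>length vs \<ge> 3\<close> by fastforce
qed

lemma sum_cycle_edges:
  assumes "distinct vs" "length vs \<ge> 3"
  shows "(\<Sum>f\<in>cycle_edges vs. g f) = (\<Sum>i<length vs. g {vs ! i, vs ! ((i + 1) mod length vs)})"
proof -
  have "cycle_edges vs = (\<lambda>i. {vs ! i, vs ! ((i + 1) mod length vs)}) ` {..<length vs}"
    unfolding cycle_edges_def by auto
  then show ?thesis
    using sum.reindex[OF inj_on_cycle_edge[OF assms]] by simp
qed

lemma sum_set_conv_sum_nth: "distinct xs \<Longrightarrow> sum f (set xs) = (\<Sum>i<length xs. f (xs ! i))"
  by (simp add: sum.distinct_set_conv_list sum_list_sum_nth atLeast0LessThan)

lemma cycle_weight_vertex_induced: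
  assumes "vertex_induced U w a" "is_cycle U vs"
  shows "cycle_weight w vs = sum a (set vs)"
proof -
  let ?n = "length vs"
  have cyc: "distinct vs" "set vs \<subseteq> U" "?n \<ge> 3"
    using \<open>is_cycle U vs\<close> unfolding is_cycle_def by auto
  have succ_less: "(i + 1) mod ?n < ?n" for i
    using \<open>?n \<ge> 3\<close> by (intro mod_less_divisor) linarith
  have edge_weight: "w {vs ! i, vs ! ((i + 1) mod ?n)} = (a (vs ! i) + a (vs ! ((i + 1) mod ?n))) / 2"
    if "i < ?n" for i
  proof -
    have "(i + 1) mod ?n \<noteq> i"
      using cyclic_successor_neq that \<open>?n \<ge> 3\<close> by simp
    then have "vs ! i \<noteq> vs ! ((i + 1) mod ?n)"
      using nth_eq_iff_index_eq[OF \<open>distinct vs\<close> that succ_less] by simp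
    moreover have "vs ! i \<in> U" "vs ! ((i + 1) mod ?n) \<in> U"
      using that succ_less cyc(2) by (meson nth_mem subsetD)+
    ultimately show ?thesis
      using \<open>vertex_induced U w a\<close> unfolding vertex_induced_def by blast
  qed
  \<comment> \<open>The successor endpoints enumerate the vertices of \<open>rotate1 vs\<close>, which has the same vertex set.\<close>
  have successors: "(\<Sum>i<?n. a (vs ! ((i + 1) mod ?n))) = sum a (set vs)"
    using sum_set_conv_sum_nth[of "rotate1 vs" a] cyc(1) by (simp add: nth_rotate1)
  have "cycle_weight w vs = (\<Sum>i<?n. (a (vs ! i) + a (vs ! ((i + 1) mod ?n))) / 2)"
    unfolding cycle_weight_def sum_cycle_edges[OF cyc(1,3)] using edge_weight by (intro sum.cong) auto
  also have "\<dots> = ((\<Sum>i<?n. a (vs ! i)) + (\<Sum>i<?n. a (vs ! ((i + 1) mod ?n)))) / 2"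
    by (simp only: sum.distrib flip: sum_divide_distrib)
  also have "\<dots> = sum a (set vs)"
    using sum_set_conv_sum_nth[of vs a] cyc(1) successors by simp
  finally show ?thesis .
qed

lemma hamiltonian_cycle_through_edge:
  assumes "finite U" "card U \<ge> 3" "e \<in> Kedges U"
  obtains vs where "is_cycle U vs" "set vs = U" "e \<in> cycle_edges vs"
proof -
  obtain u v where uv: "u \<in> U" "v \<in> U" "u \<noteq> v" "e = {u, v}"
    using \<open>e \<in> Kedges U\<close> unfolding Kedges_def by blast
  obtain xs where xs: "set xs = U - {u, v}" "distinct xs"
    using finite_distinct_list[of "U - {u, v}"] \<open>finite U\<close> by blast
  let ?vs = "u # v # xs"
  have "distinct ?vs" "set ?vs = U"
    using xs uv by auto
  then have "length ?vs = card U"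
    using distinct_card by fastforce
  then have "is_cycle U ?vs"
    using \<open>distinct ?vs\<close> \<open>set ?vs = U\<close> \<open>card U \<ge> 3\<close> unfolding is_cycle_def by simp
  moreover have "e \<in> cycle_edges ?vs"
    unfolding cycle_edges_def using \<open>length ?vs = card U\<close> \<open>card U \<ge> 3\<close> uv(4)
    by (auto intro!: exI[of _ 0])
  ultimately show thesis
    using that \<open>set ?vs = U\<close> by blast
qed

lemma Cw_vertex_induced:
  assumes "finite U" "card U \<ge> 3" "\<forall>u\<in>U. a u \<ge> 0" "vertex_induced U w a" "e \<in> Kedges U"
  shows "Cw U w e = sum a U"
  unfolding Cw_def
proof (rule Max_eqI)
  let ?S = "{cycle_weight w vs | vs. is_cycle U vs \<and> e \<in> cycle_edges vs}"
  have weight: "cycle_weight w vs = sum a (set vs)" "set vs \<subseteq> U" if "is_cycle U vs" for vs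
    using that cycle_weight_vertex_induced[OF \<open>vertex_induced U w a\<close>] unfolding is_cycle_def
    by simp_all
  have weights: "?S \<subseteq> sum a ` Pow U"
  proof
    fix y
    assume "y \<in> ?S"
    then obtain vs where "is_cycle U vs" "y = cycle_weight w vs"
      by blast
    then show "y \<in> sum a ` Pow U"
      using weight by blast
  qed
  then show "finite ?S"
    using \<open>finite U\<close> finite_subset by blast
  show "y \<le> sum a U" if y: "y \<in> ?S" for y
  proof -
    obtain B where "B \<in> Pow U" "y = sum a B"
      using subsetD[OF weights y] by (rule imageE)
    then show ?thesis
      using \<open>finite U\<close> \<open>\<forall>u\<in>U. a u \<ge> 0\<close> by (auto intro: sum_mono2)
  qed
  obtain vs where "is_cycle U vs" "set vs = U" "e \<in> cycle_edges vs"
    using hamiltonian_cycle_through_edge assms(1,2,5) by blast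
  moreover have "cycle_weight w vs = sum a U"
    using weight calculation by simp
  ultimately show "sum a U \<in> ?S"
    by (metis (mono_tags, lifting) mem_Collect_eq)
qed

lemma finite_Kedges: "finite U \<Longrightarrow> finite (Kedges U)"
  by (rule finite_subset[of _ "Pow U"]) (auto simp: Kedges_def)

lemma card_Kedges_containing:
  assumes "finite U" "x \<in> U"
  shows "card {e \<in> Kedges U. x \<in> e} = card U - 1"
proof -
  have "{e \<in> Kedges U. x \<in> e} = (\<lambda>v. {x, v}) ` (U - {x})"
    using \<open>x \<in> U\<close> unfolding Kedges_def by (auto simp: doubleton_eq_iff)
  moreover have "inj_on (\<lambda>v. {x, v}) (U - {x})"
    by (rule inj_onI) (auto simp: doubleton_eq_iff)
  ultimately show ?thesis
    using assms by (simp add: card_image card_Diff_singleton)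
qed

lemma sum_Kedges_vertex_induced:
  assumes "finite U" "vertex_induced U w a"
  shows "(\<Sum>e\<in>Kedges U. w e) = (real (card U) - 1) / 2 * sum a U"
proof -
  have edge_weight: "w e = (\<Sum>x\<in>{x \<in> U. x \<in> e}. a x) / 2" if "e \<in> Kedges U" for e
  proof -
    obtain u v where "u \<in> U" "v \<in> U" "u \<noteq> v" "e = {u, v}"
      using \<open>e \<in> Kedges U\<close> unfolding Kedges_def by blast
    moreover have "{x \<in> U. x \<in> e} = {u, v}"
      using calculation by auto
    ultimately show ?thesis
      using \<open>vertex_induced U w a\<close> unfolding vertex_induced_def by simp
  qed
  have "(\<Sum>e\<in>Kedges U. w e) = (\<Sum>e\<in>Kedges U. \<Sum>x\<in>{x \<in> U. x \<in> e}. a x) / 2"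
    by (simp add: edge_weight sum_divide_distrib)
  also have "(\<Sum>e\<in>Kedges U. \<Sum>x\<in>{x \<in> U. x \<in> e}. a x) = (\<Sum>x\<in>U. \<Sum>e\<in>{e \<in> Kedges U. x \<in> e}. a x)"
    using sum.swap_restrict[OF finite_Kedges[OF \<open>finite U\<close>] \<open>finite U\<close>, of "\<lambda>_ x. a x" "\<lambda>e x. x \<in> e"]
    by simp
  also have "\<dots> = (\<Sum>x\<in>U. real (card U - 1) * a x)"
    using card_Kedges_containing[OF \<open>finite U\<close>] by simp
  finally have "(\<Sum>e\<in>Kedges U. w e) = real (card U - 1) * sum a U / 2"
    by (simp add: sum_distrib_left)
  moreover have "real (card U - 1) = real (card U) - 1" if "U \<noteq> {}"
    using that \<open>finite U\<close> by (simp add: of_nat_diff Suc_leI card_gt_0_iff)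
  ultimately show ?thesis
    by (cases "U = {}") auto
qed

theorem proposition3p2:
  fixes U :: "'a set" and r :: nat and w :: "'a set \<Rightarrow> real" and a :: "'a \<Rightarrow> real"
  assumes "finite U" and "card U = r" and "r \<ge> 4"
    and "\<forall>e\<in>Kedges U. w e > 0"
    and "\<forall>u\<in>U. a u \<ge> 0"
    and "\<forall>u\<in>U. \<forall>v\<in>U. u \<noteq> v \<longrightarrow> w {u, v} = (a u + a v) / 2"
  shows "(\<Sum>e\<in>Kedges U. w e / Cw U w e) = (real r - 1) / 2"
proof -
  have induced: "vertex_induced U w a"
    using assms(6) unfolding vertex_induced_def .
  have total: "(\<Sum>e\<in>Kedges U. w e) = (real r - 1) / 2 * sum a U"
    using sum_Kedges_vertex_induced[OF \<open>finite U\<close> induced] \<open>card U = r\<close> by simp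
  have "\<not> card U \<le> Suc 0"
    using \<open>card U = r\<close> \<open>r \<ge> 4\<close> by simp
  then obtain u v where "u \<in> U" "v \<in> U" "u \<noteq> v"
    using card_le_Suc0_iff_eq[OF \<open>finite U\<close>] by blast
  then have "Kedges U \<noteq> {}"
    unfolding Kedges_def by blast
  then have "0 < (\<Sum>e\<in>Kedges U. w e)"
    using finite_Kedges[OF \<open>finite U\<close>] assms(4) by (simp add: sum_pos)
  then have "sum a U \<noteq> 0"
    using total by auto
  have "(\<Sum>e\<in>Kedges U. w e / Cw U w e) = (\<Sum>e\<in>Kedges U. w e) / sum a U"
    using Cw_vertex_induced[OF \<open>finite U\<close> _ assms(5) induced] assms(2,3)
    by (simp add: sum_divide_distrib)
  also have "\<dots> = (real r - 1) / 2"
    using total \<open>sum a U \<noteq> 0\<close> by simp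
  finally show ?thesis .
qed

end
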